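(* Let $A$ ($m_a\times n_a$) and $B$ ($m_b\times n_b$) be Hamming parity check matrices over $\mathbb{F}_q$ with $n_a=(q^{m_a}-1)/(q-1)\ge3$, $n_b=(q^{m_b}-1)/(q-1)\ge3$, and let $C=\{{\bf x}\in\mathbb{F}_q^{n_an_b}:(A\otimes B){\bf x}^t={\bf 0}\}$. Then for every ${\bf v}\in\mathbb{F}_q^{n_an_b}$, the Hamming distance from ${\bf v}$ to $C$ equals $\mathrm{rank}(B\,V_{\bf v}\,A^t)$ (equivalently, the rank of the main submatrix representation $M_{\bf v}$ when $A,B$ are normalized to have the standard basis vectors as their first columns).
   Context: A Hamming parity check matrix of size $m\times n$ over $\mathbb{F}_q$, $n=(q^m-1)/(q-1)$, has as columns one nonzero representative of each one-dimensional subspace of $\mathbb{F}_q^m$. $A\otimes B$ is the Kronecker product (each entry $a_{r,s}$ of $A$ replaced by the block $a_{r,s}B$). For ${\bf x}\in\mathbb{F}_q^{n_an_b}$, $V_{\bf x}$ is the $n_b\times n_a$ matrix with $(V_{\bf x})_{i,j}=x_{(j-1)n_b+i}$, so that $(A\otimes B){\bf x}^t={\bf 0}$ iff $BV_{\bf x}A^t=0$. $d({\bf v},C)=\min_{{\bf c}\in C}\mathrm{wt}({\bf v}-{\bf c})$ with $\mathrm{wt}$ the Hamming weight. *)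

theory Defs
  imports "Jordan_Normal_Form.DL_Rank"
begin

text \<open>Hamming parity check matrix of size m x n over the finite field 'a (q = card (UNIV :: 'a set)),
  n = (q^m - 1)/(q - 1): its columns are nonzero, and every nonzero vector of 'a^m is a
  scalar multiple of exactly one column (so the columns are one representative of each
  one-dimensional subspace).\<close>
definition hamming_pcm :: "'a::{finite,field} mat \<Rightarrow> nat \<Rightarrow> nat \<Rightarrow> bool" where
  "hamming_pcm H m n \<longleftrightarrow>
     n = (card (UNIV :: 'a set) ^ m - 1) div (card (UNIV :: 'a set) - 1) \<and>
     H \<in> carrier_mat m n \<and>
     (\<forall>j<n. col H j \<noteq> 0\<^sub>v m) \<and>
     (\<forall>y \<in> carrier_vec m. y \<noteq> 0\<^sub>v m \<longrightarrow> (\<exists>!j. j < n \<and> (\<exists>c. y = c \<cdot>\<^sub>v col H j)))"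

text \<open>Kronecker product: entry a_{r,s} of A replaced by the block a_{r,s} B.\<close>
definition kronecker :: "'a::times mat \<Rightarrow> 'a mat \<Rightarrow> 'a mat" where
  "kronecker A B = mat (dim_row A * dim_row B) (dim_col A * dim_col B)
     (\<lambda>(r, s). A $$ (r div dim_row B, s div dim_col B) * B $$ (r mod dim_row B, s mod dim_col B))"

definition Vmat :: "nat \<Rightarrow> nat \<Rightarrow> 'a vec \<Rightarrow> 'a mat" where
  "Vmat na nb x = mat nb na (\<lambda>(i, j). x $ (j * nb + i))"

definition hamming_wt :: "'a::zero vec \<Rightarrow> nat" where
  "hamming_wt v = card {i. i < dim_vec v \<and> v $ i \<noteq> 0}"

definition dist_to_code :: "'a::{zero,minus} vec \<Rightarrow> 'a vec set \<Rightarrow> nat" where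
  "dist_to_code v C = Min ((\<lambda>c. hamming_wt (v - c)) ` C)"

definition mat_rank :: "'a::field mat \<Rightarrow> nat" where
  "mat_rank M = vec_space.rank (dim_row M) M"

end

theory Submission
  imports Defs
begin

text \<open>
  For x in F^(na nb) call S(x) = B V_x A^T the syndrome matrix of x.  Its (b, a) entry is
  the sum over k of x_k B(b, k mod nb) A(a, k div nb), so S(x) is the sum, over the support of
  x, of the outer products x_k (column k mod nb of B)(column k div nb of A)^T.  Hence
    (1) x lies in C exactly when S(x) = 0, and S is linear, so S(v - c) = S(v) for c in C;
    (2) rank S(x) <= wt(x), because a sum of r outer products has rank at most r;
    (3) conversely every matrix S of rank r is a sum of r outer products u w^T, and since every
        nonzero vector is a multiple of a column of a Hamming matrix, each u w^T is the syndrome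
        matrix of a vector of weight at most one; so S = S(x) for some x with wt(x) <= r.
  Applying (3) to S(v) yields a codeword v - x at distance at most rank S(v), and (1), (2)
  show that no codeword is closer.
\<close>

definition outer_sum :: "nat \<Rightarrow> nat \<Rightarrow> ('k \<Rightarrow> 'a::comm_semiring_0 vec) \<Rightarrow> ('k \<Rightarrow> 'a vec) \<Rightarrow> 'k set \<Rightarrow> 'a mat" where
  "outer_sum m n u w T = mat m n (\<lambda>(i, j). \<Sum>k\<in>T. u k $ i * w k $ j)"

lemma dim_outer_sum [simp]:
  "dim_row (outer_sum m n u w T) = m" "dim_col (outer_sum m n u w T) = n"
  by (simp_all add: outer_sum_def)

text \<open>Subadditivity of rank: a sum of card T outer products has rank at most card T.\<close>
lemma (in vec_space) rank_outer_sum_le: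
  assumes "finite T"
  shows "rank (outer_sum n nc u w T) \<le> card T"
  using assms
proof (induction T rule: finite_induct)
  case empty
  have "outer_sum n nc u w {} = 0\<^sub>m n nc" by (rule eq_matI) (auto simp: outer_sum_def)
  then show ?case using rank_0I by simp
next
  case (insert k T)
  define R where "R = mat n nc (\<lambda>(i, j). u k $ i * w k $ j)"
  have split: "outer_sum n nc u w (insert k T) = outer_sum n nc u w T + R"
    by (rule eq_matI) (use insert in \<open>auto simp: outer_sum_def R_def\<close>)
  have "rank R \<le> 1"
    by (rule rank_le_1_product_entries[of R nc "\<lambda>i. u k $ i" "\<lambda>j. w k $ j"]) (auto simp: R_def)
  moreover have "rank (outer_sum n nc u w T + R) \<le> rank (outer_sum n nc u w T) + rank R"
    by (rule rank_subadditive) (auto simp: outer_sum_def R_def)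
  ultimately show ?case using split insert by simp
qed

text \<open>The column space of M is spanned by rank M of its columns (a maximal independent subset).\<close>
lemma (in vec_space) column_space_basis:
  assumes M: "M \<in> carrier_mat n nc"
  shows "\<exists>U. finite U \<and> U \<subseteq> carrier_vec n \<and> card U = rank M \<and> (\<forall>j<nc. col M j \<in> span U)"
proof -
  let ?indep = "\<lambda>T. T \<subseteq> set (cols M) \<and> lin_indpt T"
  have "lin_indpt {}"
    by (metis empty_subsetI fin_dim finite_basis_exists subset_li_is_li vec_vs vectorspace.basis_def)
  then obtain U where U: "finite U" "maximal U ?indep"
    using maximal_exists_superset[of "set (cols M)" ?indep "{}"] by blast
  have U_cols: "U \<subseteq> set (cols M)" and U_indep: "lin_indpt U"
    using U(2) unfolding maximal_def by auto
  have cols_carrier: "set (cols M) \<subseteq> carrier_vec n" using cols_dim M by blast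
  have U_carrier: "U \<subseteq> carrier_vec n" using U_cols cols_carrier by blast
  have "col M j \<in> span U" if j: "j < nc" for j
  proof (rule ccontr)
    assume not_in: "col M j \<notin> span U"
    have col_in: "col M j \<in> set (cols M)" using j M by (simp add: cols_def)
    then have col_carrier: "col M j \<in> carrier_vec n" using cols_carrier by blast
    have col_notin: "col M j \<notin> U" using not_in in_own_span[OF U_carrier] by blast
    then have "lin_indpt (insert (col M j) U)"
      using lin_dep_iff_in_span[OF U_carrier U_indep col_carrier] not_in by simp
    with col_in U_cols have "insert (col M j) U = U"
      using U(2) unfolding maximal_def by (meson insert_subset subset_insertI)
    with col_notin show False by blast
  qed
  then show ?thesis
    using U(1) U_carrier rank_card_indpt[OF M U(2)] by auto
qed

lemma (in vec_space) outer_sum_of_rank: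
  assumes M: "M \<in> carrier_mat n nc"
  shows "\<exists>U w. finite U \<and> U \<subseteq> carrier_vec n \<and> card U = rank M \<and>
                 (\<forall>u. w u \<in> carrier_vec nc) \<and> M = outer_sum n nc id w U"
proof -
  obtain U where U: "finite U" "U \<subseteq> carrier_vec n" "card U = rank M"
    and span: "\<And>j. j < nc \<Longrightarrow> col M j \<in> span U"
    using column_space_basis[OF M] by blast
  have "\<forall>j<nc. \<exists>a. lincomb a U = col M j"
    using finite_in_span[OF U(1)] U(2) span by fastforce
  then obtain f where f: "\<And>j. j < nc \<Longrightarrow> lincomb (f j) U = col M j" by metis
  define w where "w u = vec nc (\<lambda>j. f j u)" for u
  have "M = outer_sum n nc id w U"
  proof (rule eq_matI)
    fix i j assume "i < dim_row (outer_sum n nc id w U)" "j < dim_col (outer_sum n nc id w U)"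
    then have i: "i < n" and j: "j < nc" by (auto simp: outer_sum_def)
    have "M $$ (i, j) = lincomb (f j) U $ i" using f[OF j] M i j by simp
    also have "\<dots> = (\<Sum>u\<in>U. f j u * u $ i)" using lincomb_index[OF i U(2)] .
    finally show "M $$ (i, j) = outer_sum n nc id w U $$ (i, j)"
      using i j by (simp add: outer_sum_def w_def mult.commute)
  qed (use M in \<open>auto simp: outer_sum_def\<close>)
  then show ?thesis using U by (intro exI[of _ U] exI[of _ w]) (simp add: w_def)
qed

lemma minus_zero_mat: "(M :: 'a::group_add mat) \<in> carrier_mat n m \<Longrightarrow> M - 0\<^sub>m n m = M"
  by (intro eq_matI) auto

text \<open>Mixed-radix indexing: the pair (j, i) with j < na and i < nb is stored at index j nb + i.\<close>
lemma mixed_radix_bound: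
  assumes "j < na" and "i < nb"
  shows "j * nb + i < na * (nb :: nat)"
proof -
  have "(j + 1) * nb \<le> na * nb" using assms(1) by (intro mult_le_mono1) simp
  then show ?thesis using assms(2) by simp
qed

lemma sum_lessThan_mult:
  "(\<Sum>k<na * nb. g k) = (\<Sum>j<na. \<Sum>i<nb. g (j * nb + i :: nat))"
proof -
  have "(\<Sum>k<na * nb. g k) = (\<Sum>j<na. \<Sum>k\<in>{j * nb..<j * nb + nb}. g k)"
    by (rule sum.nat_group[symmetric])
  also have "\<dots> = (\<Sum>j<na. \<Sum>i<nb. g (j * nb + i))"
    by (simp add: sum.shift_bounds_nat_ivl[where m = 0, simplified] atLeast0LessThan add.commute)
  finally show ?thesis .
qed

lemma syndrome_entry:
  fixes A B :: "'a::comm_semiring_0 mat"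
  assumes A: "A \<in> carrier_mat ma na" and B: "B \<in> carrier_mat mb nb"
    and b: "b < mb" and a: "a < ma"
  shows "(B * Vmat na nb x * transpose_mat A) $$ (b, a)
           = (\<Sum>k<na * nb. x $ k * B $$ (b, k mod nb) * A $$ (a, k div nb))"
proof -
  have "(B * Vmat na nb x * transpose_mat A) $$ (b, a)
          = (\<Sum>j<na. (\<Sum>i<nb. B $$ (b, i) * x $ (j * nb + i)) * A $$ (a, j))"
    using A B a b by (simp add: Vmat_def scalar_prod_def atLeast0LessThan row_def col_def)
  also have "\<dots> = (\<Sum>j<na. \<Sum>i<nb. x $ (j * nb + i) * B $$ (b, (j * nb + i) mod nb)
                                      * A $$ (a, (j * nb + i) div nb))"
    by (simp add: sum_distrib_left sum_distrib_right mult_ac)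
  finally show ?thesis by (simp add: sum_lessThan_mult)
qed

lemma syndrome_carrier:
  fixes A B :: "'a::semiring_0 mat"
  assumes A: "A \<in> carrier_mat ma na" and B: "B \<in> carrier_mat mb nb"
  shows "B * Vmat na nb x * transpose_mat A \<in> carrier_mat mb ma"
proof -
  have "Vmat na nb x \<in> carrier_mat nb na" by (simp add: Vmat_def)
  then have "B * Vmat na nb x \<in> carrier_mat mb na" by (rule mult_carrier_mat[OF B])
  then show ?thesis by (rule mult_carrier_mat) (use A in simp)
qed

lemma kronecker_mult_vec_entry:
  fixes A B :: "'a::comm_semiring_0 mat"
  assumes A: "A \<in> carrier_mat ma na" and B: "B \<in> carrier_mat mb nb"
    and x: "x \<in> carrier_vec (na * nb)" and b: "b < mb" and a: "a < ma"
  shows "(kronecker A B *\<^sub>v x) $ (a * mb + b) = (B * Vmat na nb x * transpose_mat A) $$ (b, a)"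
proof -
  have r: "a * mb + b < ma * mb" using mixed_radix_bound[OF a b] .
  have "(a * mb + b) div mb = a" "(a * mb + b) mod mb = b" using b by auto
  then have "(kronecker A B *\<^sub>v x) $ (a * mb + b)
               = (\<Sum>k<na * nb. A $$ (a, k div nb) * B $$ (b, k mod nb) * x $ k)"
    using A B x r by (simp add: kronecker_def scalar_prod_def atLeast0LessThan row_def)
  also have "\<dots> = (B * Vmat na nb x * transpose_mat A) $$ (b, a)"
    using syndrome_entry[OF A B b a] by (simp add: mult_ac)
  finally show ?thesis .
qed

lemma kronecker_kernel_iff:
  fixes A B :: "'a::comm_semiring_0 mat"
  assumes A: "A \<in> carrier_mat ma na" and B: "B \<in> carrier_mat mb nb"
    and x: "x \<in> carrier_vec (na * nb)"
  shows "kronecker A B *\<^sub>v x = 0\<^sub>v (ma * mb) \<longleftrightarrow> B * Vmat na nb x * transpose_mat A = 0\<^sub>m mb ma"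
proof
  assume kernel: "kronecker A B *\<^sub>v x = 0\<^sub>v (ma * mb)"
  show "B * Vmat na nb x * transpose_mat A = 0\<^sub>m mb ma"
  proof (rule eq_matI)
    fix b a assume "b < dim_row (0\<^sub>m mb ma :: 'a mat)" "a < dim_col (0\<^sub>m mb ma :: 'a mat)"
    then have b: "b < mb" and a: "a < ma" by auto
    have "a * mb + b < ma * mb" using mixed_radix_bound[OF a b] .
    then show "(B * Vmat na nb x * transpose_mat A) $$ (b, a) = 0\<^sub>m mb ma $$ (b, a)"
      using kernel kronecker_mult_vec_entry[OF A B x b a] a b by (metis index_zero_mat(1) index_zero_vec(1))
  qed (use A B in \<open>auto simp: Vmat_def\<close>)
next
  assume zero: "B * Vmat na nb x * transpose_mat A = 0\<^sub>m mb ma"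
  show "kronecker A B *\<^sub>v x = 0\<^sub>v (ma * mb)"
  proof (rule eq_vecI)
    fix r assume "r < dim_vec (0\<^sub>v (ma * mb) :: 'a vec)"
    then have r: "r < ma * mb" by simp
    then have "mb > 0" by (cases mb) auto
    then have b: "r mod mb < mb" by simp
    have a: "r div mb < ma" using r by (simp add: less_mult_imp_div_less)
    have "r = r div mb * mb + r mod mb" by simp
    then show "(kronecker A B *\<^sub>v x) $ r = 0\<^sub>v (ma * mb) $ r"
      using kronecker_mult_vec_entry[OF A B x b a] zero a b r by (metis index_zero_mat(1) index_zero_vec(1))
  qed (use A B in \<open>simp add: kronecker_def\<close>)
qed

lemma syndrome_diff:
  fixes A B :: "'a::comm_ring mat"
  assumes A: "A \<in> carrier_mat ma na" and B: "B \<in> carrier_mat mb nb"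
    and x: "x \<in> carrier_vec (na * nb)" and y: "y \<in> carrier_vec (na * nb)"
  shows "B * Vmat na nb (x - y) * transpose_mat A
           = B * Vmat na nb x * transpose_mat A - B * Vmat na nb y * transpose_mat A"
proof (rule eq_matI)
  fix b a assume "b < dim_row (B * Vmat na nb x * transpose_mat A - B * Vmat na nb y * transpose_mat A)"
    "a < dim_col (B * Vmat na nb x * transpose_mat A - B * Vmat na nb y * transpose_mat A)"
  then have b: "b < mb" and a: "a < ma" using A B by auto
  show "(B * Vmat na nb (x - y) * transpose_mat A) $$ (b, a)
          = (B * Vmat na nb x * transpose_mat A - B * Vmat na nb y * transpose_mat A) $$ (b, a)"
    using x y a b A B
    by (simp add: syndrome_entry[OF A B b a] sum_subtractf algebra_simps)
qed (use A B in \<open>auto simp: Vmat_def\<close>)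

lemma syndrome_sum_entry:
  fixes A B :: "'a::comm_semiring_0 mat"
  assumes A: "A \<in> carrier_mat ma na" and B: "B \<in> carrier_mat mb nb"
    and b: "b < mb" and a: "a < ma"
  shows "(B * Vmat na nb (vec (na * nb) (\<lambda>k. \<Sum>i\<in>I. y i $ k)) * transpose_mat A) $$ (b, a)
           = (\<Sum>i\<in>I. (B * Vmat na nb (y i) * transpose_mat A) $$ (b, a))"
  unfolding syndrome_entry[OF A B b a]
  by (simp add: sum_distrib_right sum.swap[of _ I])

lemma syndrome_outer_sum:
  fixes A B :: "'a::comm_semiring_0 mat"
  assumes A: "A \<in> carrier_mat ma na" and B: "B \<in> carrier_mat mb nb"
    and x: "x \<in> carrier_vec (na * nb)"
  shows "B * Vmat na nb x * transpose_mat A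
           = outer_sum mb ma (\<lambda>k. x $ k \<cdot>\<^sub>v col B (k mod nb)) (\<lambda>k. col A (k div nb))
               {k. k < na * nb \<and> x $ k \<noteq> 0}"
proof (rule eq_matI)
  fix b a assume "b < dim_row (outer_sum mb ma (\<lambda>k. x $ k \<cdot>\<^sub>v col B (k mod nb)) (\<lambda>k. col A (k div nb))
               {k. k < na * nb \<and> x $ k \<noteq> 0})"
    "a < dim_col (outer_sum mb ma (\<lambda>k. x $ k \<cdot>\<^sub>v col B (k mod nb)) (\<lambda>k. col A (k div nb))
               {k. k < na * nb \<and> x $ k \<noteq> 0})"
  then have b: "b < mb" and a: "a < ma" by simp_all
  have indices: "k mod nb < nb \<and> k div nb < na" if "k < na * nb" for k
    using that by (cases nb) (auto simp: less_mult_imp_div_less)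
  have "(B * Vmat na nb x * transpose_mat A) $$ (b, a)
          = (\<Sum>k<na * nb. x $ k * B $$ (b, k mod nb) * A $$ (a, k div nb))"
    by (rule syndrome_entry[OF A B b a])
  also have "\<dots> = (\<Sum>k\<in>{k. k < na * nb \<and> x $ k \<noteq> 0}. x $ k * B $$ (b, k mod nb) * A $$ (a, k div nb))"
    by (rule sum.mono_neutral_right) auto
  also have "\<dots> = outer_sum mb ma (\<lambda>k. x $ k \<cdot>\<^sub>v col B (k mod nb)) (\<lambda>k. col A (k div nb))
                     {k. k < na * nb \<and> x $ k \<noteq> 0} $$ (b, a)"
    using A B a b indices by (auto simp: outer_sum_def intro!: sum.cong)
  finally show "(B * Vmat na nb x * transpose_mat A) $$ (b, a) = outer_sum mb ma
      (\<lambda>k. x $ k \<cdot>\<^sub>v col B (k mod nb)) (\<lambda>k. col A (k div nb)) {k. k < na * nb \<and> x $ k \<noteq> 0} $$ (b, a)" .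
qed (use A B in \<open>auto simp: Vmat_def\<close>)

lemma rank_syndrome_le_weight:
  fixes A B :: "'a::field mat"
  assumes A: "A \<in> carrier_mat ma na" and B: "B \<in> carrier_mat mb nb"
    and x: "x \<in> carrier_vec (na * nb)"
  shows "mat_rank (B * Vmat na nb x * transpose_mat A) \<le> hamming_wt x"
proof -
  interpret vec_space "TYPE('a)" mb .
  have "mat_rank (B * Vmat na nb x * transpose_mat A)
          = rank (outer_sum mb ma (\<lambda>k. x $ k \<cdot>\<^sub>v col B (k mod nb)) (\<lambda>k. col A (k div nb))
                    {k. k < na * nb \<and> x $ k \<noteq> 0})"
    using B by (simp add: mat_rank_def syndrome_outer_sum[OF A B x])
  also have "\<dots> \<le> card {k. k < na * nb \<and> x $ k \<noteq> 0}"
    by (rule rank_outer_sum_le) simp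
  finally show ?thesis using x by (simp add: hamming_wt_def)
qed

lemma hamming_wt_zero [simp]: "hamming_wt (0\<^sub>v n) = 0"
proof -
  have "{i. i < n \<and> 0\<^sub>v n $ i \<noteq> 0} = {}" by auto
  then show ?thesis by (simp add: hamming_wt_def)
qed

lemma hamming_wt_le_dim: "hamming_wt x \<le> dim_vec x"
proof -
  have "hamming_wt x \<le> card {..<dim_vec x}" unfolding hamming_wt_def by (rule card_mono) auto
  then show ?thesis by simp
qed

text \<open>The weight is subadditive: the support of a sum lies in the union of the supports.\<close>
lemma hamming_wt_sum_le:
  assumes "finite I" and y: "\<And>i. i \<in> I \<Longrightarrow> y i \<in> carrier_vec n"
  shows "hamming_wt (vec n (\<lambda>k. \<Sum>i\<in>I. y i $ k)) \<le> (\<Sum>i\<in>I. hamming_wt (y i))"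
proof -
  let ?supp = "\<lambda>i. {k. k < n \<and> y i $ k \<noteq> 0}"
  have "{k. k < n \<and> (\<Sum>i\<in>I. y i $ k) \<noteq> 0} \<subseteq> (\<Union>i\<in>I. ?supp i)"
    by (auto intro: ccontr)
  then have "hamming_wt (vec n (\<lambda>k. \<Sum>i\<in>I. y i $ k)) \<le> card (\<Union>i\<in>I. ?supp i)"
    unfolding hamming_wt_def using \<open>finite I\<close> by (intro card_mono) auto
  also have "\<dots> \<le> (\<Sum>i\<in>I. card (?supp i))" by (rule card_UN_le[OF \<open>finite I\<close>])
  also have "\<dots> = (\<Sum>i\<in>I. hamming_wt (y i))"
  proof (rule sum.cong)
    fix i assume "i \<in> I"
    then have "dim_vec (y i) = n" using y carrier_vecD by blast
    then show "card (?supp i) = hamming_wt (y i)" by (simp add: hamming_wt_def)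
  qed simp
  finally show ?thesis .
qed

lemma hamming_pcm_carrier: "hamming_pcm H m n \<Longrightarrow> H \<in> carrier_mat m n"
  unfolding hamming_pcm_def by blast

lemma hamming_pcm_covers:
  assumes "hamming_pcm H m n" and "y \<in> carrier_vec m" and "y \<noteq> 0\<^sub>v m"
  obtains j c where "j < n" and "y = c \<cdot>\<^sub>v col H j"
  using assms unfolding hamming_pcm_def by blast

text \<open>Every outer product u w^T is the syndrome matrix of a vector of weight at most one:
  u and w are multiples of columns j of B and j' of A, so a single nonzero entry at position
  j' nb + j suffices.\<close>
lemma outer_product_is_syndrome:
  fixes A B :: "'a::{finite,field} mat"
  assumes A: "hamming_pcm A ma na" and B: "hamming_pcm B mb nb"
    and u: "u \<in> carrier_vec mb" and w: "w \<in> carrier_vec ma"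
  shows "\<exists>x\<in>carrier_vec (na * nb). hamming_wt x \<le> 1 \<and>
           (\<forall>b<mb. \<forall>a<ma. (B * Vmat na nb x * transpose_mat A) $$ (b, a) = u $ b * w $ a)"
proof (cases "u = 0\<^sub>v mb \<or> w = 0\<^sub>v ma")
  case True
  have "(B * Vmat na nb (0\<^sub>v (na * nb)) * transpose_mat A) $$ (b, a) = u $ b * w $ a"
    if "b < mb" "a < ma" for b a
    using True that syndrome_entry[OF hamming_pcm_carrier[OF A] hamming_pcm_carrier[OF B] that]
    by auto
  then show ?thesis by (intro bexI[of _ "0\<^sub>v (na * nb)"]) auto
next
  case False
  obtain j \<alpha> where j: "j < nb" and u_eq: "u = \<alpha> \<cdot>\<^sub>v col B j"
    using hamming_pcm_covers[OF B u] False by blast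
  obtain j' \<beta> where j': "j' < na" and w_eq: "w = \<beta> \<cdot>\<^sub>v col A j'"
    using hamming_pcm_covers[OF A w] False by blast
  define k where "k = j' * nb + j"
  have k: "k < na * nb" unfolding k_def using mixed_radix_bound[OF j' j] .
  have k_mod: "k mod nb = j" and k_div: "k div nb = j'" using j by (auto simp: k_def)
  define x where "x = vec (na * nb) (\<lambda>i. if i = k then \<alpha> * \<beta> else 0)"
  have "{i. i < dim_vec x \<and> x $ i \<noteq> 0} \<subseteq> {k}" by (auto simp: x_def split: if_splits)
  then have "hamming_wt x \<le> 1"
    unfolding hamming_wt_def using card_mono[of "{k}"] by fastforce
  moreover have "(B * Vmat na nb x * transpose_mat A) $$ (b, a) = u $ b * w $ a"
    if b: "b < mb" and a: "a < ma" for b a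
  proof -
    have "(B * Vmat na nb x * transpose_mat A) $$ (b, a)
            = (\<Sum>i<na * nb. x $ i * B $$ (b, i mod nb) * A $$ (a, i div nb))"
      by (rule syndrome_entry[OF hamming_pcm_carrier[OF A] hamming_pcm_carrier[OF B] b a])
    also have "\<dots> = (\<Sum>i<na * nb. if i = k then \<alpha> * \<beta> * B $$ (b, i mod nb) * A $$ (a, i div nb) else 0)"
      by (rule sum.cong) (auto simp: x_def)
    also have "\<dots> = \<alpha> * \<beta> * B $$ (b, j) * A $$ (a, j')"
      using k k_mod k_div by simp
    finally show ?thesis
      using hamming_pcm_carrier[OF A] hamming_pcm_carrier[OF B] a b j j'
      by (simp add: u_eq w_eq mult_ac)
  qed
  ultimately show ?thesis by (auto simp: x_def)
qed

text \<open>Upper bound: every mb x ma matrix S is the syndrome matrix of a vector of weight at most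
  rank S.  Write S as a sum of rank S outer products and realise each by a weight-one vector.\<close>
lemma syndrome_surjective:
  fixes A B :: "'a::{finite,field} mat"
  assumes A: "hamming_pcm A ma na" and B: "hamming_pcm B mb nb"
    and S: "S \<in> carrier_mat mb ma"
  shows "\<exists>x\<in>carrier_vec (na * nb). hamming_wt x \<le> mat_rank S \<and> B * Vmat na nb x * transpose_mat A = S"
proof -
  interpret vec_space "TYPE('a)" mb .
  obtain U w where U: "finite U" "U \<subseteq> carrier_vec mb" "card U = mat_rank S"
    and w: "\<And>u. w u \<in> carrier_vec ma" and S_eq: "S = outer_sum mb ma id w U"
    using outer_sum_of_rank[OF S] S by (auto simp: mat_rank_def)
  have "\<forall>u\<in>U. \<exists>x\<in>carrier_vec (na * nb). hamming_wt x \<le> 1 \<and>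
          (\<forall>b<mb. \<forall>a<ma. (B * Vmat na nb x * transpose_mat A) $$ (b, a) = u $ b * w u $ a)"
    using outer_product_is_syndrome[OF A B] U(2) w by blast
  then obtain y where y_carrier: "\<And>u. u \<in> U \<Longrightarrow> y u \<in> carrier_vec (na * nb)"
    and y_wt: "\<And>u. u \<in> U \<Longrightarrow> hamming_wt (y u) \<le> 1"
    and y_syn: "\<And>u b a. u \<in> U \<Longrightarrow> b < mb \<Longrightarrow> a < ma \<Longrightarrow>
                  (B * Vmat na nb (y u) * transpose_mat A) $$ (b, a) = u $ b * w u $ a"
    by metis
  define x where "x = vec (na * nb) (\<lambda>k. \<Sum>u\<in>U. y u $ k)"
  have x_carrier: "x \<in> carrier_vec (na * nb)" by (simp add: x_def)
  have "hamming_wt x \<le> (\<Sum>u\<in>U. hamming_wt (y u))"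
    unfolding x_def by (rule hamming_wt_sum_le[OF U(1) y_carrier])
  also have "\<dots> \<le> card U" using y_wt sum_mono[of U "\<lambda>u. hamming_wt (y u)" "\<lambda>_. 1"] by simp
  finally have "hamming_wt x \<le> mat_rank S" using U(3) by simp
  moreover have "B * Vmat na nb x * transpose_mat A = S"
  proof (rule eq_matI)
    fix b a assume "b < dim_row S" "a < dim_col S"
    then have b: "b < mb" and a: "a < ma" using S by auto
    have "(B * Vmat na nb x * transpose_mat A) $$ (b, a)
            = (\<Sum>u\<in>U. (B * Vmat na nb (y u) * transpose_mat A) $$ (b, a))"
      unfolding x_def by (rule syndrome_sum_entry[OF hamming_pcm_carrier[OF A] hamming_pcm_carrier[OF B] b a])
    also have "\<dots> = (\<Sum>u\<in>U. u $ b * w u $ a)" using y_syn b a by (intro sum.cong) auto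
    finally show "(B * Vmat na nb x * transpose_mat A) $$ (b, a) = S $$ (b, a)"
      using S_eq a b by (simp add: outer_sum_def)
  qed (use S hamming_pcm_carrier[OF A] hamming_pcm_carrier[OF B] in \<open>auto simp: Vmat_def\<close>)
  ultimately show ?thesis using x_carrier by blast
qed

lemma dist_to_code_eqI:
  assumes C: "C \<subseteq> carrier_vec n"
    and lower: "\<And>c. c \<in> C \<Longrightarrow> r \<le> hamming_wt (v - c)"
    and c0: "c0 \<in> C" and attained: "hamming_wt (v - c0) \<le> r"
  shows "dist_to_code v C = r"
proof -
  let ?dists = "(\<lambda>c. hamming_wt (v - c)) ` C"
  have "hamming_wt (v - c) \<le> n" if "c \<in> C" for c
    using hamming_wt_le_dim[of "v - c"] C that by auto
  then have "?dists \<subseteq> {..n}" by blast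
  then have finite: "finite ?dists" by (rule finite_subset) simp
  have "r = hamming_wt (v - c0)" using lower[OF c0] attained by (rule antisym)
  then have "r \<in> ?dists" using c0 by blast
  then show ?thesis
    unfolding dist_to_code_def using finite lower by (intro Min_eqI) auto
qed

text \<open>The main theorem: the codewords v - c all have syndrome matrix S(v), whose rank bounds
  their weight from below, and the surjectivity lemma produces one attaining this bound.\<close>
theorem mainTheorem4:
  fixes A B :: "'a::{finite,field} mat" and ma na mb nb :: nat
  assumes "hamming_pcm A ma na" and "hamming_pcm B mb nb"
    and "na \<ge> 3" and "nb \<ge> 3"
    and "C = {x \<in> carrier_vec (na * nb). kronecker A B *\<^sub>v x = 0\<^sub>v (ma * mb)}"
    and "v \<in> carrier_vec (na * nb)"
  shows "dist_to_code v C = mat_rank (B * Vmat na nb v * transpose_mat A)"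
proof -
  note A = hamming_pcm_carrier[OF assms(1)] and B = hamming_pcm_carrier[OF assms(2)]
  let ?syn = "\<lambda>x. B * Vmat na nb x * transpose_mat A"
  have code: "c \<in> C \<longleftrightarrow> c \<in> carrier_vec (na * nb) \<and> ?syn c = 0\<^sub>m mb ma" for c
    using assms(5) kronecker_kernel_iff[OF A B] by blast
  have syn_v: "?syn v \<in> carrier_mat mb ma" by (rule syndrome_carrier[OF A B])
  obtain x where x: "x \<in> carrier_vec (na * nb)" "hamming_wt x \<le> mat_rank (?syn v)" "?syn x = ?syn v"
    using syndrome_surjective[OF assms(1,2) syn_v] by blast
  show ?thesis
  proof (rule dist_to_code_eqI)
    show "C \<subseteq> carrier_vec (na * nb)" using code by blast
    show "v - x \<in> C" using code syndrome_diff[OF A B assms(6) x(1)] x(3) syn_v assms(6) x(1) by auto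
    have "v - (v - x) = x" by (rule eq_vecI) (use assms(6) x(1) in auto)
    then show "hamming_wt (v - (v - x)) \<le> mat_rank (?syn v)" using x(2) by simp
  next
    fix c assume "c \<in> C"
    then have "?syn (v - c) = ?syn v"
      using code syndrome_diff[OF A B assms(6)] minus_zero_mat[OF syn_v] by auto
    then show "mat_rank (?syn v) \<le> hamming_wt (v - c)"
      using rank_syndrome_le_weight[OF A B] assms(6) \<open>c \<in> C\<close> code by (metis minus_carrier_vec)
  qed
qed

end
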